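(* Let $M=[a_{pq},b_{pq}]_{p=1,\dots,n;\,q=1,\dots,m}$ be a 2-person normal form game matrix, and fix $i\in\{1,\dots,n\}$ and $j\in\{1,\dots,m\}$. Let $x_1,\dots,x_m$ and $y_1,\dots,y_n$ be real numbers with $x_j=y_i$. Then there exists a unique 2-person normal form game matrix $\widehat M=[\hat a_{pq},\hat b_{pq}]$ of dimensions $n\times m$ such that $\widehat M$ can be obtained from $M$ by an OI-transformation, $\hat a_{iq}=x_q$ for all $q\le m$, and $\hat a_{pj}=y_p$ for all $p\le n$.
   Context: A 2-person normal form game matrix of dimensions $n\times m$ is $M=[a_{ij},b_{ij}]_{i\le n,\,j\le m}$, where $(a_{ij},b_{ij})\in\mathbb{R}^2$ are the payoffs of the row player $A$ and column player $B$ when $A$ plays strategy $A_i$ and $B$ plays $B_j$. A preplay offer by $A$ to $B$ of amount $\delta\ge 0$ contingent on $B_j$ replaces $(a_{ij},b_{ij})$ by $(a_{ij}-\delta,b_{ij}+\delta)$ for every $i$ (other entries unchanged); a preplay offer by $B$ to $A$ of amount $\delta\ge0$ contingent on $A_i$ replaces $(a_{ij},b_{ij})$ by $(a_{ij}+\delta,b_{ij}-\delta)$ for every $j$. Each such map is a POI-transformation; an OI-transformation is a composition of finitely many POI-transformations (all amounts non-negative). *)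

theory Defs
  imports Complex_Main
begin

text \<open>A 2-person normal form game matrix with row strategies indexed by the finite
type 'r (n = CARD('r)) and column strategies indexed by the finite type 'c
(m = CARD('c)); entry M p q = (a_pq, b_pq).\<close>
type_synonym ('r, 'c) game = "'r \<Rightarrow> 'c \<Rightarrow> real \<times> real"

definition offer_A :: "'c \<Rightarrow> real \<Rightarrow> ('r, 'c) game \<Rightarrow> ('r, 'c) game" where
  "offer_A j d M = (\<lambda>p q. if q = j then (fst (M p q) - d, snd (M p q) + d) else M p q)"

definition offer_B :: "'r \<Rightarrow> real \<Rightarrow> ('r, 'c) game \<Rightarrow> ('r, 'c) game" where
  "offer_B i d M = (\<lambda>p q. if p = i then (fst (M p q) + d, snd (M p q) - d) else M p q)"

definition POI :: "('r, 'c) game \<Rightarrow> ('r, 'c) game \<Rightarrow> bool" where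
  "POI M M' \<longleftrightarrow> (\<exists>j d. d \<ge> 0 \<and> M' = offer_A j d M) \<or> (\<exists>i d. d \<ge> 0 \<and> M' = offer_B i d M)"

definition OI :: "('r, 'c) game \<Rightarrow> ('r, 'c) game \<Rightarrow> bool" where
  "OI M M' \<longleftrightarrow> POI\<^sup>*\<^sup>* M M'"

end

theory Submission
  imports Defs
begin

(* Composing preplay offers only accumulates side payments: if A has paid
   a q in total contingent on column q and B has paid b p contingent on row p, the game
   is  transfer M a b  with entries (a_pq - a q + b p, b_pq + a q - b p).  Hence
   (1) every game obtained from M by an OI-transformation is of this form, and
   (2) conversely every transfer with non-negative a, b is realised by finitely many
       offers, one per strategy (the strategy sets are finite).
   Adding the same constant to all a q and b p does not change the game (3), so any
   transfer whatsoever is OI-reachable after such a shift.  The A-payoff of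
   transfer M a b at (p,q) depends only on b p - a q, and
   b p - a q = (b p - a j) + (b i - a q) - (b i - a j), so row i and column j of the
   A-payoffs determine the whole game (4).  Existence follows from (2),(3) with explicit
   a, b solving the row/column equations (this uses x j = y i); uniqueness from (1),(4). *)

definition transfer :: "('r, 'c) game \<Rightarrow> ('c \<Rightarrow> real) \<Rightarrow> ('r \<Rightarrow> real) \<Rightarrow> ('r, 'c) game" where
  "transfer M a b = (\<lambda>p q. (fst (M p q) - a q + b p, snd (M p q) + a q - b p))"

lemma transfer_zero: "transfer M (\<lambda>_. 0) (\<lambda>_. 0) = M"
  by (simp add: transfer_def algebra_simps)

lemma offer_A_transfer:
  "offer_A j d (transfer M a b) = transfer M (\<lambda>q. a q + (if q = j then d else 0)) b"
  by (auto simp: offer_A_def transfer_def fun_eq_iff)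

lemma offer_B_transfer:
  "offer_B i d (transfer M a b) = transfer M a (\<lambda>p. b p + (if p = i then d else 0))"
  by (auto simp: offer_B_def transfer_def fun_eq_iff)

lemma OI_imp_transfer:
  assumes "OI M M'"
  shows "\<exists>a b. M' = transfer M a b"
  using assms unfolding OI_def
proof (induction rule: rtranclp_induct)
  case base
  show ?case using transfer_zero by metis
next
  case (step M1 M2)
  then obtain a b where M1: "M1 = transfer M a b" by blast
  from \<open>POI M1 M2\<close> show ?case
    unfolding POI_def M1 by (metis offer_A_transfer offer_B_transfer)
qed

lemma POI_column_payments:
  assumes "finite S" and "\<And>q. d q \<ge> 0"
  shows "POI\<^sup>*\<^sup>* (transfer M a b) (transfer M (\<lambda>q. a q + (if q \<in> S then d q else 0)) b)"
  using assms(1)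
proof (induction S rule: finite_induct)
  case empty
  show ?case by simp
next
  case (insert j S)
  let ?a = "\<lambda>q. a q + (if q \<in> S then d q else 0)"
  have "POI (transfer M ?a b) (offer_A j (d j) (transfer M ?a b))"
    unfolding POI_def using assms(2) by blast
  moreover have "offer_A j (d j) (transfer M ?a b)
      = transfer M (\<lambda>q. a q + (if q \<in> insert j S then d q else 0)) b"
    using insert.hyps(2) by (auto simp: offer_A_def transfer_def fun_eq_iff)
  ultimately show ?case
    using insert.IH by (metis (no_types, lifting) rtranclp.rtrancl_into_rtrancl)
qed

lemma POI_row_payments:
  assumes "finite S" and "\<And>p. d p \<ge> 0"
  shows "POI\<^sup>*\<^sup>* (transfer M a b) (transfer M a (\<lambda>p. b p + (if p \<in> S then d p else 0)))"
  using assms(1)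
proof (induction S rule: finite_induct)
  case empty
  show ?case by simp
next
  case (insert i S)
  let ?b = "\<lambda>p. b p + (if p \<in> S then d p else 0)"
  have "POI (transfer M a ?b) (offer_B i (d i) (transfer M a ?b))"
    unfolding POI_def using assms(2) by blast
  moreover have "offer_B i (d i) (transfer M a ?b)
      = transfer M a (\<lambda>p. b p + (if p \<in> insert i S then d p else 0))"
    using insert.hyps(2) by (auto simp: offer_B_def transfer_def fun_eq_iff)
  ultimately show ?case
    using insert.IH by (metis (no_types, lifting) rtranclp.rtrancl_into_rtrancl)
qed

lemma OI_transfer_nonneg:
  fixes M :: "('r::finite, 'c::finite) game"
  assumes "\<And>q. a q \<ge> 0" and "\<And>p. b p \<ge> 0"
  shows "OI M (transfer M a b)"
proof -
  have "POI\<^sup>*\<^sup>* (transfer M (\<lambda>_. 0) (\<lambda>_. 0)) (transfer M a (\<lambda>_. 0))"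
    using POI_column_payments[of UNIV a M "\<lambda>_. 0" "\<lambda>_. 0"] assms(1) by simp
  moreover have "POI\<^sup>*\<^sup>* (transfer M a (\<lambda>_. 0)) (transfer M a b)"
    using POI_row_payments[of UNIV b M a "\<lambda>_. 0"] assms(2) by simp
  ultimately show ?thesis
    unfolding OI_def transfer_zero by simp
qed

lemma transfer_shift: "transfer M (\<lambda>q. a q + c) (\<lambda>p. b p + c) = transfer M a b"
  by (simp add: transfer_def algebra_simps)

lemma finite_shift_nonneg:
  fixes f :: "'a::finite \<Rightarrow> real"
  shows "0 \<le> f q + (\<Sum>k\<in>UNIV. \<bar>f k\<bar>)"
proof -
  have "\<bar>f q\<bar> \<le> (\<Sum>k\<in>UNIV. \<bar>f k\<bar>)"
    by (rule member_le_sum) auto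
  then show ?thesis by linarith
qed

lemma OI_transfer:
  fixes M :: "('r::finite, 'c::finite) game"
  shows "OI M (transfer M a b)"
proof -
  define c where "c = (\<Sum>q\<in>UNIV. \<bar>a q\<bar>) + (\<Sum>p\<in>UNIV. \<bar>b p\<bar>)"
  have "0 \<le> a q + c" for q
    using finite_shift_nonneg[of a q] sum_nonneg[of UNIV "\<lambda>p. \<bar>b p\<bar>"]
    unfolding c_def by linarith
  moreover have "0 \<le> b p + c" for p
    using finite_shift_nonneg[of b p] sum_nonneg[of UNIV "\<lambda>q. \<bar>a q\<bar>"]
    unfolding c_def by linarith
  ultimately have "OI M (transfer M (\<lambda>q. a q + c) (\<lambda>p. b p + c))"
    by (rule OI_transfer_nonneg)
  then show ?thesis unfolding transfer_shift .
qed

lemma transfer_determined: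
  assumes row: "\<And>q. fst (transfer M a b i q) = fst (transfer M a' b' i q)"
    and col: "\<And>p. fst (transfer M a b p j) = fst (transfer M a' b' p j)"
  shows "transfer M a b = transfer M a' b'"
proof -
  have "b p - a q = b' p - a' q" for p q
  proof -
    have "b i - a q = b' i - a' q" using row[of q] by (simp add: transfer_def)
    moreover have "b p - a j = b' p - a' j" using col[of p] by (simp add: transfer_def)
    moreover have "b i - a j = b' i - a' j" using row[of j] by (simp add: transfer_def)
    ultimately show ?thesis by linarith
  qed
  then show ?thesis
    by (auto simp: transfer_def fun_eq_iff algebra_simps)
qed

theorem theorem2:
  fixes M :: "('r::finite, 'c::finite) game"
    and i :: 'r and j :: 'c
    and x :: "'c \<Rightarrow> real" and y :: "'r \<Rightarrow> real"
  assumes "x j = y i"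
  shows "\<exists>!Mh :: ('r, 'c) game. OI M Mh \<and> (\<forall>q. fst (Mh i q) = x q) \<and> (\<forall>p. fst (Mh p j) = y p)"
proof (rule ex1I)
  define a where "a q = fst (M i q) - x q" for q
  define b where "b p = y p - fst (M p j) + a j" for p
  let ?Mh = "transfer M a b"
  have row: "fst (?Mh i q) = x q" for q
    using assms by (simp add: transfer_def a_def b_def)
  have col: "fst (?Mh p j) = y p" for p
    by (simp add: transfer_def b_def)
  show "OI M ?Mh \<and> (\<forall>q. fst (?Mh i q) = x q) \<and> (\<forall>p. fst (?Mh p j) = y p)"
    using OI_transfer row col by blast
  fix Mh
  assume Mh: "OI M Mh \<and> (\<forall>q. fst (Mh i q) = x q) \<and> (\<forall>p. fst (Mh p j) = y p)"
  then obtain a' b' where "Mh = transfer M a' b'"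
    using OI_imp_transfer by blast
  with Mh show "Mh = ?Mh"
    using transfer_determined[of M a' b' i a b j] row col by simp
qed

end
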